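(* Assume Utility Richness, and assume Evidential Independence holds (for the choice sets under consideration). Suppose the agent is modest: there are an evidence partition $\mathcal{E}$, a cell $E\in\mathcal{E}$, and a state $\omega_0\in E$ with $p(\{\omega_0\})>0$ such that $\mathcal{P}_E(\omega_0)\neq p(\cdot\mid E)$. Then there exists a choice set $\mathcal{S}$ (with a unique post-learning optimal action in every state) such that $\mathrm{Val}_{General}(\mathcal{E})<0$.
   Context: Standing setup: $\Omega$ is a finite set of states; $p$ is a probability function on $\Omega$; $u:\mathscr{O}\to\mathbb{R}$ a utility function on outcomes; actions are functions $f:\Omega\to\mathscr{O}$; for a probability $q$, $\mathbb{E}_q(f)=\sum_{\omega} q(\{\omega\})u(f(\omega))$. A choice set $\mathcal{S}$ is a finite set of actions; $\mathcal{E}$ is a partition of $\Omega$ with $p(E)>0$ for all $E\in\mathcal{E}$, and $p(\cdot\mid E)$ is ratio conditional probability. An update rule assigns to each $E\in\mathcal{E}$ a map $\mathcal{P}_E:E\to\Delta(\Omega)$ (probability functions on $\Omega$) with $\mathcal{P}_E(\omega)(E)=1$; $\mathcal{P}_{\mathcal{E}}(\omega)=\mathcal{P}_E(\omega)$ for $\omega\in E$. For a choice set in which each $\omega$ has a unique maximizer $f^*_\omega\in\mathcal{S}$ of $\mathbb{E}_{\mathcal{P}_{\mathcal{E}}(\omega)}(\cdot)$, define $\mathrm{Val}_{General}(\mathcal{E})=\sum_{\omega\in\Omega}p(\{\omega\})u(f^*_\omega(\omega))-\max_{f\in\mathcal{S}}\mathbb{E}_p(f)$. Utility Richness: for every $x\in[0,1]$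 there is an outcome $o\in\mathscr{O}$ with $u(o)=x$ (utilities are determined up to positive affine transformation). Evidential Independence (relative to a choice set $\mathcal{S}$): for every $E\in\mathcal{E}$, every $f\in\mathcal{S}$ and every $g\in\mathcal{S}$ with $p(C_g)>0$ where $C_g=\{\omega\in E: f^*_\omega=g\}$, one has $\mathbb{E}_{p(\cdot\mid C_g)}(f)=\mathbb{E}_{p(\cdot\mid E)}(f)$. *)

theory Defs
  imports Complex_Main "HOL-Library.Disjoint_Sets"
begin

definition prob_fun :: "('w::finite \<Rightarrow> real) \<Rightarrow> bool" where
  "prob_fun q \<longleftrightarrow> (\<forall>w. q w \<ge> 0) \<and> (\<Sum>w\<in>UNIV. q w) = 1"

definition Pr :: "('w \<Rightarrow> real) \<Rightarrow> 'w set \<Rightarrow> real" where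
  "Pr q A = (\<Sum>w\<in>A. q w)"

definition cond :: "('w \<Rightarrow> real) \<Rightarrow> 'w set \<Rightarrow> ('w \<Rightarrow> real)" where
  "cond q A = (\<lambda>w. if w \<in> A then q w / Pr q A else 0)"

definition EU :: "('w::finite \<Rightarrow> real) \<Rightarrow> ('o \<Rightarrow> real) \<Rightarrow> ('w \<Rightarrow> 'o) \<Rightarrow> real" where
  "EU q u f = (\<Sum>w\<in>UNIV. q w * u (f w))"

definition utility_richness :: "('o \<Rightarrow> real) \<Rightarrow> bool" where
  "utility_richness u \<longleftrightarrow> (\<forall>x::real. 0 \<le> x \<and> x \<le> 1 \<longrightarrow> (\<exists>oc. u oc = x))"

definition evidence_partition :: "('w::finite \<Rightarrow> real) \<Rightarrow> 'w set set \<Rightarrow> bool" where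
  "evidence_partition p \<E> \<longleftrightarrow> partition_on UNIV \<E> \<and> (\<forall>E\<in>\<E>. Pr p E > 0)"

definition update_rule :: "'w set set \<Rightarrow> ('w set \<Rightarrow> 'w \<Rightarrow> ('w::finite \<Rightarrow> real)) \<Rightarrow> bool" where
  "update_rule \<E> P \<longleftrightarrow> (\<forall>E\<in>\<E>. \<forall>w\<in>E. prob_fun (P E w) \<and> Pr (P E w) E = 1)"

definition PE :: "'w set set \<Rightarrow> ('w set \<Rightarrow> 'w \<Rightarrow> ('w \<Rightarrow> real)) \<Rightarrow> 'w \<Rightarrow> ('w \<Rightarrow> real)" where
  "PE \<E> P w = P (THE E. E \<in> \<E> \<and> w \<in> E) w"

definition is_opt :: "('o \<Rightarrow> real) \<Rightarrow> 'w set set \<Rightarrow> ('w set \<Rightarrow> 'w \<Rightarrow> ('w::finite \<Rightarrow> real))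
    \<Rightarrow> ('w \<Rightarrow> 'o) set \<Rightarrow> 'w \<Rightarrow> ('w \<Rightarrow> 'o) \<Rightarrow> bool" where
  "is_opt u \<E> P S w f \<longleftrightarrow> f \<in> S \<and> (\<forall>g\<in>S. EU (PE \<E> P w) u g \<le> EU (PE \<E> P w) u f)"

definition unique_max where
  "unique_max u \<E> P S \<longleftrightarrow> (\<forall>w. \<exists>!f. is_opt u \<E> P S w f)"

definition fstar where
  "fstar u \<E> P S w = (THE f. is_opt u \<E> P S w f)"

definition Val_General :: "('w::finite \<Rightarrow> real) \<Rightarrow> ('o \<Rightarrow> real) \<Rightarrow> 'w set set
    \<Rightarrow> ('w set \<Rightarrow> 'w \<Rightarrow> ('w \<Rightarrow> real)) \<Rightarrow> ('w \<Rightarrow> 'o) set \<Rightarrow> real" where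
  "Val_General p u \<E> P S =
     (\<Sum>w\<in>UNIV. p w * u (fstar u \<E> P S w w)) - Max ((\<lambda>f. EU p u f) ` S)"

definition evidential_independence :: "('w::finite \<Rightarrow> real) \<Rightarrow> ('o \<Rightarrow> real) \<Rightarrow> 'w set set
    \<Rightarrow> ('w set \<Rightarrow> 'w \<Rightarrow> ('w \<Rightarrow> real)) \<Rightarrow> ('w \<Rightarrow> 'o) set \<Rightarrow> bool" where
  "evidential_independence p u \<E> P S \<longleftrightarrow>
     (\<forall>E\<in>\<E>. \<forall>f\<in>S. \<forall>g\<in>S.
        let C = {w\<in>E. fstar u \<E> P S w = g} in
        Pr p C > 0 \<longrightarrow> EU (cond p C) u f = EU (cond p E) u f)"

end

theory Submission
  imports Defs
begin

text \<open>The agent's posterior P_E(\<omega>0) and the prior p(\<cdot> | E) disagree on some state v \<in> E.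
  Choose a threshold t strictly between the two probabilities of v and different from every
  posterior probability of v inside E, and offer a sure payoff 1/2 against a bet on v at odds t
  that pays badly outside E. After learning, the agent takes the bet exactly on a set
  C \<subseteq> E containing \<omega>0, so p(C) > 0. Evidential independence says that the bet has the same
  prior expectation given C as given E, where it is negative by the choice of t; so taking it on
  C and the sure payoff elsewhere does worse than always taking the sure payoff.\<close>

lemma prob_fun_vanishes_outside:
  fixes q :: "'w::finite \<Rightarrow> real"
  assumes "prob_fun q" "Pr q A = 1" "w \<notin> A"
  shows "q w = 0"
proof -
  have nonneg: "\<forall>x. q x \<ge> 0" using assms(1) unfolding prob_fun_def by auto
  have "(\<Sum>x\<in>UNIV. q x) = (\<Sum>x\<in>A. q x) + (\<Sum>x\<in>-A. q x)"
    using sum.union_disjoint[of A "-A" q] by (simp add: Un_commute)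
  hence "(\<Sum>x\<in>-A. q x) = 0" using assms(1,2) unfolding prob_fun_def Pr_def by simp
  hence "\<forall>x\<in>-A. q x = 0" using nonneg by (simp add: sum_nonneg_eq_0_iff)
  thus ?thesis using assms(3) by auto
qed

lemma prob_fun_sum_mult_concentrated:
  fixes q :: "'w::finite \<Rightarrow> real"
  assumes "prob_fun q" "Pr q A = 1"
  shows "(\<Sum>x\<in>UNIV. q x * h x) = (\<Sum>x\<in>A. q x * h x)"
  by (rule sum.mono_neutral_right) (auto simp: prob_fun_vanishes_outside[OF assms])

lemma prob_fun_le_one:
  fixes q :: "'w::finite \<Rightarrow> real"
  assumes "prob_fun q"
  shows "q w \<le> 1"
proof -
  have "q w \<le> (\<Sum>x\<in>UNIV. q x)"
    using assms unfolding prob_fun_def by (intro member_le_sum) auto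
  thus ?thesis using assms unfolding prob_fun_def by simp
qed

lemma sum_cond_mult:
  fixes p :: "'w::finite \<Rightarrow> real"
  shows "(\<Sum>x\<in>UNIV. cond p A x * h x) = (\<Sum>x\<in>A. p x * h x) / Pr p A"
proof -
  have "(\<Sum>x\<in>UNIV. cond p A x * h x) = (\<Sum>x\<in>A. cond p A x * h x)"
    by (rule sum.mono_neutral_right) (auto simp: cond_def)
  also have "\<dots> = (\<Sum>x\<in>A. p x * h x / Pr p A)"
    by (rule sum.cong) (auto simp: cond_def)
  finally show ?thesis by (simp add: sum_divide_distrib)
qed

lemma Pr_cond_self:
  assumes "Pr p A > 0"
  shows "Pr (cond p A) A = 1"
proof -
  have "Pr (cond p A) A = (\<Sum>x\<in>A. p x) / Pr p A"
    unfolding Pr_def cond_def by (simp add: sum_divide_distrib[symmetric])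
  thus ?thesis using assms unfolding Pr_def by simp
qed

lemma prob_fun_cond:
  fixes p :: "'w::finite \<Rightarrow> real"
  assumes "prob_fun p" "Pr p A > 0"
  shows "prob_fun (cond p A)"
proof -
  have "(\<Sum>x\<in>UNIV. cond p A x) = 1"
    using sum_cond_mult[of p A "\<lambda>_. 1"] assms(2) unfolding Pr_def by simp
  moreover have "cond p A x \<ge> 0" for x
    using assms unfolding prob_fun_def cond_def by simp
  ultimately show ?thesis unfolding prob_fun_def by simp
qed

lemma EU_offset:
  fixes q :: "'w::finite \<Rightarrow> real"
  assumes "prob_fun q" "\<And>w. u (g w) = c + d w"
  shows "EU q u g = c + (\<Sum>w\<in>UNIV. q w * d w)"
  using assms unfolding EU_def prob_fun_def
  by (simp add: distrib_left sum.distrib sum_distrib_left[symmetric] mult.commute)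

lemma utility_richness_act:
  assumes "utility_richness u" "\<And>w. 0 \<le> h w \<and> h w \<le> 1"
  obtains a where "\<And>w. u (a w) = h w"
proof
  show "u (SOME oc. u oc = h w) = h w" for w
    using assms unfolding utility_richness_def by (metis (mono_tags) someI_ex)
qed

lemma exists_threshold_between:
  fixes a b :: real
  assumes "a \<noteq> b" "a \<in> {0..1}" "b \<in> {0..1}" "finite T"
  obtains t \<sigma> where "t \<in> {0<..<1}" "t \<notin> T" "\<bar>\<sigma>\<bar> \<le> 1" "\<sigma> * (a - t) > 0" "\<sigma> * (b - t) < 0"
proof -
  have "infinite {min a b<..<max a b}"
    using assms(1) by (intro infinite_Ioo) (simp add: min_def max_def)
  then obtain t where t: "t \<in> {min a b<..<max a b}" "t \<notin> T"
    using assms(4) by (metis Diff_iff finite_Diff2 finite.emptyI ex_in_conv)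
  show ?thesis
  proof
    show "t \<in> {0<..<1}" "t \<notin> T" using t assms(2,3) by auto
    show "\<bar>sgn (a - b)\<bar> \<le> 1" by (simp add: abs_sgn_eq)
    show "sgn (a - b) * (a - t) > 0" "sgn (a - b) * (b - t) < 0"
      using t(1) by (auto simp: min_def max_def sgn_if split: if_splits)
  qed
qed

text \<open>Utility of the bet on v at odds t relative to the sure payoff 1/2: the sign of \<sigma>
  selects the side, and outside E the bet pays utility 0.\<close>

definition bet :: "'w set \<Rightarrow> 'w \<Rightarrow> real \<Rightarrow> real \<Rightarrow> 'w \<Rightarrow> real" where
  "bet E v t \<sigma> w = (if w \<in> E then \<sigma> * (of_bool (w = v) - t) / 2 else - 1 / 2)"

lemma bet_bounds:
  assumes "t \<in> {0..1}" "\<bar>\<sigma>\<bar> \<le> 1"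
  shows "1 / 2 + bet E v t \<sigma> w \<in> {0..1}"
proof -
  have "\<bar>of_bool (w = v) - t\<bar> \<le> 1" using assms(1) by auto
  hence "\<bar>\<sigma> * (of_bool (w = v) - t)\<bar> \<le> 1"
    using assms(2) by (simp add: abs_mult mult_le_one)
  thus ?thesis unfolding bet_def by (auto simp: abs_le_iff)
qed

lemma sum_bet_inside:
  fixes \<pi> :: "'w::finite \<Rightarrow> real"
  assumes "prob_fun \<pi>" "Pr \<pi> E = 1" "v \<in> E"
  shows "(\<Sum>x\<in>UNIV. \<pi> x * bet E v t \<sigma> x) = \<sigma> * (\<pi> v - t) / 2"
proof -
  have "(\<Sum>x\<in>UNIV. \<pi> x * bet E v t \<sigma> x) = (\<Sum>x\<in>E. \<pi> x * bet E v t \<sigma> x)"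
    by (rule prob_fun_sum_mult_concentrated[OF assms(1,2)])
  also have "\<dots> = (\<Sum>x\<in>E. \<sigma> / 2 * (if x = v then \<pi> x else 0) - \<sigma> * t / 2 * \<pi> x)"
    unfolding bet_def by (rule sum.cong) (auto simp: field_simps)
  also have "\<dots> = \<sigma> / 2 * (\<Sum>x\<in>E. if x = v then \<pi> x else 0) - \<sigma> * t / 2 * (\<Sum>x\<in>E. \<pi> x)"
    by (simp only: sum_subtractf sum_distrib_left)
  also have "\<dots> = \<sigma> / 2 * \<pi> v - \<sigma> * t / 2 * Pr \<pi> E"
    using assms(3) by (simp add: Pr_def)
  finally show ?thesis using assms(2) by (simp add: field_simps)
qed

lemma sum_bet_outside:
  fixes \<pi> :: "'w::finite \<Rightarrow> real"
  assumes "prob_fun \<pi>" "Pr \<pi> c = 1" "c \<inter> E = {}"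
  shows "(\<Sum>x\<in>UNIV. \<pi> x * bet E v t \<sigma> x) = - 1 / 2"
proof -
  have "(\<Sum>x\<in>UNIV. \<pi> x * bet E v t \<sigma> x) = (\<Sum>x\<in>c. \<pi> x * bet E v t \<sigma> x)"
    by (rule prob_fun_sum_mult_concentrated[OF assms(1,2)])
  also have "\<dots> = (\<Sum>x\<in>c. \<pi> x * (- 1 / 2))"
    using assms(3) unfolding bet_def by (intro sum.cong) auto
  finally show ?thesis using assms(2) by (simp only: sum_distrib_right[symmetric] Pr_def)
qed

lemma is_opt_pair_iff:
  assumes "EU (PE \<E> P w) u f \<noteq> EU (PE \<E> P w) u g"
  shows "is_opt u \<E> P {f, g} w h \<longleftrightarrow>
    h = (if EU (PE \<E> P w) u f < EU (PE \<E> P w) u g then g else f)"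
  using assms unfolding is_opt_def by auto

lemma unique_max_pair:
  assumes "\<And>w. EU (PE \<E> P w) u f \<noteq> EU (PE \<E> P w) u g"
  shows "unique_max u \<E> P {f, g}"
  unfolding unique_max_def is_opt_pair_iff[OF assms] by simp

lemma fstar_pair:
  assumes "\<And>w. EU (PE \<E> P w) u f \<noteq> EU (PE \<E> P w) u g"
  shows "fstar u \<E> P {f, g} w = (if EU (PE \<E> P w) u f < EU (PE \<E> P w) u g then g else f)"
  unfolding fstar_def is_opt_pair_iff[OF assms] by simp

lemma fstar_in:
  assumes "unique_max u \<E> P S"
  shows "fstar u \<E> P S w \<in> S"
proof -
  have "is_opt u \<E> P S w (fstar u \<E> P S w)"
    using assms unfolding unique_max_def fstar_def by (metis theI')
  thus ?thesis unfolding is_opt_def by simp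
qed

lemma Val_General_pair_le:
  fixes p :: "'w::finite \<Rightarrow> real"
  assumes "prob_fun p" "unique_max u \<E> P {f, g}"
    and "\<And>w. u (f w) = c" "\<And>w. u (g w) = c + d w"
  shows "Val_General p u \<E> P {f, g} \<le> (\<Sum>w | fstar u \<E> P {f, g} w = g. p w * d w)"
proof -
  let ?C = "{w. fstar u \<E> P {f, g} w = g}"
  have "p w * u (fstar u \<E> P {f, g} w w) = c * p w + (if w \<in> ?C then p w * d w else 0)" for w
    using fstar_in[OF assms(2), of w] assms(3,4) by (auto simp: algebra_simps)
  hence "(\<Sum>w\<in>UNIV. p w * u (fstar u \<E> P {f, g} w w))
      = c * (\<Sum>w\<in>UNIV. p w) + (\<Sum>w\<in>UNIV. if w \<in> ?C then p w * d w else 0)"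
    by (simp add: sum.distrib sum_distrib_left)
  also have "\<dots> = c + (\<Sum>w\<in>?C. p w * d w)"
    using assms(1) unfolding prob_fun_def by (simp add: sum.If_cases)
  finally have gain: "(\<Sum>w\<in>UNIV. p w * u (fstar u \<E> P {f, g} w w)) = c + (\<Sum>w\<in>?C. p w * d w)" .
  have "c = EU p u f" using EU_offset[OF assms(1), of u f c "\<lambda>_. 0"] assms(3) by simp
  also have "\<dots> \<le> Max ((\<lambda>a. EU p u a) ` {f, g})" by (intro Max_ge) auto
  finally show ?thesis unfolding Val_General_def gain by simp
qed

locale updating_agent =
  fixes p :: "'w::finite \<Rightarrow> real"
    and \<E> :: "'w set set"
    and P :: "'w set \<Rightarrow> 'w \<Rightarrow> ('w \<Rightarrow> real)"
  assumes prior: "prob_fun p"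
    and evidence: "evidence_partition p \<E>"
    and update: "update_rule \<E> P"
begin

lemma cell_exists:
  obtains c where "c \<in> \<E>" "w \<in> c"
  using evidence unfolding evidence_partition_def by (metis partition_onD1 UNIV_I Union_iff)

lemma cell_unique: "c \<in> \<E> \<Longrightarrow> c' \<in> \<E> \<Longrightarrow> w \<in> c \<Longrightarrow> w \<in> c' \<Longrightarrow> c = c'"
  using evidence unfolding evidence_partition_def by (metis partition_onD2 disjointD disjoint_iff)

lemma Pr_cell_pos: "c \<in> \<E> \<Longrightarrow> Pr p c > 0"
  using evidence unfolding evidence_partition_def by blast

lemma PE_cell: "c \<in> \<E> \<Longrightarrow> w \<in> c \<Longrightarrow> PE \<E> P w = P c w"
  unfolding PE_def using cell_unique by (metis (mono_tags, lifting) the_equality)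

lemma posterior_prob_fun: "c \<in> \<E> \<Longrightarrow> w \<in> c \<Longrightarrow> prob_fun (P c w) \<and> Pr (P c w) c = 1"
  using update unfolding update_rule_def by blast

lemma prob_fun_PE: "prob_fun (PE \<E> P w)"
  by (metis cell_exists PE_cell posterior_prob_fun)

lemma posterior_bet:
  assumes "E \<in> \<E>" "v \<in> E"
  shows "(\<Sum>x\<in>UNIV. PE \<E> P w x * bet E v t \<sigma> x)
    = (if w \<in> E then \<sigma> * (P E w v - t) / 2 else - 1 / 2)"
proof -
  obtain c where c: "c \<in> \<E>" "w \<in> c" by (rule cell_exists)
  show ?thesis
  proof (cases "w \<in> E")
    case True
    with c assms(1) have "c = E" using cell_unique by blast
    with c True show ?thesis
      using sum_bet_inside[of "P E w" E v t \<sigma>] posterior_prob_fun[OF c] assms(2) by (simp add: PE_cell)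
  next
    case False
    with c assms(1) have "c \<inter> E = {}" using cell_unique by blast
    with c False show ?thesis
      using sum_bet_outside[of "P c w" c E v t \<sigma>] posterior_prob_fun[OF c] by (simp add: PE_cell)
  qed
qed

lemma posterior_differs_at:
  assumes "E \<in> \<E>" "\<omega>0 \<in> E" "P E \<omega>0 \<noteq> cond p E"
  obtains v where "v \<in> E" "P E \<omega>0 v \<noteq> cond p E v" "P E \<omega>0 v \<in> {0..1}" "cond p E v \<in> {0..1}"
proof -
  obtain v where v: "P E \<omega>0 v \<noteq> cond p E v" using assms(3) by blast
  have q: "prob_fun (P E \<omega>0)" "Pr (P E \<omega>0) E = 1" using posterior_prob_fun assms(1,2) by auto
  have r: "prob_fun (cond p E)" using prob_fun_cond prior Pr_cell_pos assms(1) by blast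
  have "v \<in> E"
  proof (rule ccontr)
    assume "v \<notin> E"
    then show False using v prob_fun_vanishes_outside[OF q] unfolding cond_def by simp
  qed
  moreover have "P E \<omega>0 v \<in> {0..1}" "cond p E v \<in> {0..1}"
    using q(1) r prob_fun_le_one unfolding prob_fun_def by auto
  ultimately show ?thesis using that v by blast
qed

lemma exists_separating_bet:
  assumes "E \<in> \<E>" "\<omega>0 \<in> E" "P E \<omega>0 \<noteq> cond p E"
  obtains d where "\<And>w. 1 / 2 + d w \<in> {0..1}" "\<And>w. (\<Sum>x\<in>UNIV. PE \<E> P w x * d x) \<noteq> 0"
    "{w. (\<Sum>x\<in>UNIV. PE \<E> P w x * d x) > 0} \<subseteq> E" "(\<Sum>x\<in>UNIV. PE \<E> P \<omega>0 x * d x) > 0"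
    "(\<Sum>x\<in>UNIV. cond p E x * d x) < 0"
proof -
  obtain v where v: "v \<in> E" "P E \<omega>0 v \<noteq> cond p E v" "P E \<omega>0 v \<in> {0..1}" "cond p E v \<in> {0..1}"
    using posterior_differs_at[OF assms] by blast
  obtain t \<sigma> where t: "t \<in> {0<..<1}" "t \<notin> (\<lambda>w. P E w v) ` E" "\<bar>\<sigma>\<bar> \<le> 1"
      "\<sigma> * (P E \<omega>0 v - t) > 0" "\<sigma> * (cond p E v - t) < 0"
    using exists_threshold_between[OF v(2-4) finite_imageI[OF finite]] by blast
  have D: "(\<Sum>x\<in>UNIV. PE \<E> P w x * bet E v t \<sigma> x)
      = (if w \<in> E then \<sigma> * (P E w v - t) / 2 else - 1 / 2)" for w
    using posterior_bet assms(1) v(1) .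
  have PrE: "Pr p E > 0" using Pr_cell_pos[OF assms(1)] .
  show thesis
  proof (rule that[of "bet E v t \<sigma>"])
    show "1 / 2 + bet E v t \<sigma> w \<in> {0..1}" for w
      using t(1) by (intro bet_bounds t(3)) simp
    show "(\<Sum>x\<in>UNIV. PE \<E> P w x * bet E v t \<sigma> x) \<noteq> 0" for w
      using D t(2,4) by auto
    show "{w. (\<Sum>x\<in>UNIV. PE \<E> P w x * bet E v t \<sigma> x) > 0} \<subseteq> E"
      using D by (auto split: if_splits)
    show "(\<Sum>x\<in>UNIV. PE \<E> P \<omega>0 x * bet E v t \<sigma> x) > 0"
      using D assms(2) t(4) by simp
    show "(\<Sum>x\<in>UNIV. cond p E x * bet E v t \<sigma> x) < 0"
      using sum_bet_inside[OF prob_fun_cond[OF prior PrE] Pr_cond_self[OF PrE] v(1), of t \<sigma>] t(5)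
      by simp
  qed
qed

lemma pair_choice_set:
  fixes u :: "'o \<Rightarrow> real"
  assumes "utility_richness u" "c \<in> {0..1}" "\<And>w. c + d w \<in> {0..1}"
    and "\<And>w. (\<Sum>x\<in>UNIV. PE \<E> P w x * d x) \<noteq> 0"
  obtains f g :: "'w \<Rightarrow> 'o"
  where "\<And>w. u (f w) = c" "\<And>w. u (g w) = c + d w" "unique_max u \<E> P {f, g}"
    "\<And>w. fstar u \<E> P {f, g} w = g \<longleftrightarrow> (\<Sum>x\<in>UNIV. PE \<E> P w x * d x) > 0"
proof -
  obtain f :: "'w \<Rightarrow> 'o" where f: "\<And>w. u (f w) = c"
    using utility_richness_act[of u "\<lambda>_. c"] assms(1,2) by auto
  obtain g :: "'w \<Rightarrow> 'o" where g: "\<And>w. u (g w) = c + d w"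
    using utility_richness_act[of u "\<lambda>w. c + d w"] assms(1,3) by auto
  have EU_diff: "EU (PE \<E> P w) u g = EU (PE \<E> P w) u f + (\<Sum>x\<in>UNIV. PE \<E> P w x * d x)" for w
    using EU_offset[OF prob_fun_PE, of u g c d] EU_offset[OF prob_fun_PE, of u f c "\<lambda>_. 0"] f g
    by simp
  hence EU_ne: "EU (PE \<E> P w) u f \<noteq> EU (PE \<E> P w) u g" for w using assms(4) by simp
  hence "f \<noteq> g" by blast
  show thesis
    using that[OF f g unique_max_pair[OF EU_ne]] fstar_pair[OF EU_ne] EU_diff \<open>f \<noteq> g\<close> by auto
qed

text \<open>Evidential independence transfers the negative expectation of d given E to the set
  where g is chosen.\<close>

lemma Val_General_pair_negative:
  assumes EI: "evidential_independence p u \<E> P {f, g}"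
    and "E \<in> \<E>" and UM: "unique_max u \<E> P {f, g}"
    and "\<And>w. u (f w) = c" "\<And>w. u (g w) = c + d w"
    and "{w. fstar u \<E> P {f, g} w = g} \<subseteq> E" "Pr p {w. fstar u \<E> P {f, g} w = g} > 0"
    and "(\<Sum>x\<in>UNIV. cond p E x * d x) < 0"
  shows "Val_General p u \<E> P {f, g} < 0"
proof -
  let ?C = "{w. fstar u \<E> P {f, g} w = g}"
  have "?C = {w \<in> E. fstar u \<E> P {f, g} w = g}" using assms(6) by blast
  hence "EU (cond p ?C) u g = EU (cond p E) u g"
    using EI assms(2,7) unfolding evidential_independence_def Let_def by auto
  hence "(\<Sum>x\<in>UNIV. cond p ?C x * d x) = (\<Sum>x\<in>UNIV. cond p E x * d x)"
    using EU_offset[where u = u and g = g and d = d, OF prob_fun_cond[OF prior assms(7)] assms(5)]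
      EU_offset[where u = u and g = g and d = d,
        OF prob_fun_cond[OF prior Pr_cell_pos[OF assms(2)]] assms(5)]
    by simp
  hence "(\<Sum>x\<in>?C. p x * d x) / Pr p ?C < 0" using assms(8) by (simp add: sum_cond_mult)
  hence "(\<Sum>x\<in>?C. p x * d x) < 0" using assms(7) by (simp add: divide_less_0_iff)
  thus ?thesis using Val_General_pair_le[OF prior UM assms(4,5)] by linarith
qed

end

theorem theorem2:
  fixes p :: "'w::finite \<Rightarrow> real"
    and u :: "'o \<Rightarrow> real"
    and \<E> :: "'w set set"
    and P :: "'w set \<Rightarrow> 'w \<Rightarrow> ('w \<Rightarrow> real)"
    and E :: "'w set"
    and \<omega>0 :: 'w
  assumes "prob_fun p"
    and "utility_richness u"
    and "evidence_partition p \<E>"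
    and "update_rule \<E> P"
    and EI: "\<forall>S. finite S \<and> unique_max u \<E> P S \<longrightarrow> evidential_independence p u \<E> P S"
    and "E \<in> \<E>" and "\<omega>0 \<in> E" and "p \<omega>0 > 0"
    and "P E \<omega>0 \<noteq> cond p E"
  shows "\<exists>S. finite S \<and> unique_max u \<E> P S \<and> Val_General p u \<E> P S < 0"
proof -
  interpret updating_agent p \<E> P using assms(1,3,4) by unfold_locales
  obtain d where d: "\<And>w. 1 / 2 + d w \<in> {0..1}"
    and D_ne: "\<And>w. (\<Sum>x\<in>UNIV. PE \<E> P w x * d x) \<noteq> 0"
    and taken_in_E: "{w. (\<Sum>x\<in>UNIV. PE \<E> P w x * d x) > 0} \<subseteq> E"
    and taken_at_\<omega>0: "(\<Sum>x\<in>UNIV. PE \<E> P \<omega>0 x * d x) > 0"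
    and bad_given_E: "(\<Sum>x\<in>UNIV. cond p E x * d x) < 0"
    using exists_separating_bet[OF assms(6,7,9)] by blast
  have half: "(1 / 2 :: real) \<in> {0..1}" by simp
  obtain f g where f: "\<And>w. u (f w) = 1 / 2" and g: "\<And>w. u (g w) = 1 / 2 + d w"
    and UM: "unique_max u \<E> P {f, g}"
    and chosen: "\<And>w. fstar u \<E> P {f, g} w = g \<longleftrightarrow> (\<Sum>x\<in>UNIV. PE \<E> P w x * d x) > 0"
    using pair_choice_set[OF assms(2) half d D_ne] by blast
  have chosen_in_E: "{w. fstar u \<E> P {f, g} w = g} \<subseteq> E"
    using chosen taken_in_E by auto
  have "p \<omega>0 \<le> Pr p {w. fstar u \<E> P {f, g} w = g}"
    unfolding Pr_def using prior chosen taken_at_\<omega>0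
    by (intro member_le_sum) (auto simp: prob_fun_def)
  hence chosen_pos: "Pr p {w. fstar u \<E> P {f, g} w = g} > 0" using assms(8) by linarith
  have "evidential_independence p u \<E> P {f, g}" using EI UM by simp
  hence "Val_General p u \<E> P {f, g} < 0"
    by (rule Val_General_pair_negative[OF _ assms(6) UM f g chosen_in_E chosen_pos bad_given_E])
  with UM show ?thesis by (intro exI[of _ "{f, g}"]) simp
qed

end
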